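(* Fix $s\in(\tfrac12,1)$. For $k\in\mathbb{Z}$ and a positive integer $m$, let $\Lambda_m=k^2+\frac{m^2+(m+1)^2}{2}$. There exists a constant $C>0$ (independent of $k,l,m,\tau$) such that for all $k,l\in\mathbb{Z}$, all positive integers $m$ and all $\tau\in\mathbb{R}$: \[ \Big(l^2-\tfrac{m^2+(m+1)^2}{2}\Big)^2\ge C m^2; \] \[ \big|(i\tau+k^2+l^2-\Lambda_m)^{-1}\big|\le \frac{C}{\sqrt{m^2+\tau^2}}; \] \[ \big|(i\tau+k^2+l^2-\Lambda_m)^{-1}\big|\le \frac{C}{m^{1-s}|l|^{s}}\quad\text{whenever } l\neq 0; \] \[ \big|(i\tau+k^2-\Lambda_m)^{-1}\big|\le \frac{C}{\sqrt{\tau^2+m^4}}. \] *)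

theory Defs
  imports Complex_Main
begin

definition Lambda :: "int \<Rightarrow> nat \<Rightarrow> real" where
  "Lambda k m = real_of_int (k^2) + (real m ^ 2 + (real m + 1) ^ 2) / 2"

end

theory Submission
  imports Defs
begin

text \<open>
  The number \<open>(m\<^sup>2 + (m+1)\<^sup>2)/2 = m\<^sup>2 + m + 1/2\<close> lies halfway between two consecutive squares,
  so its distance to any integer square \<open>l\<^sup>2\<close> is at least \<open>m + 1/2\<close>, and also at least \<open>|l|/2\<close>.
  Since \<open>1 / |i\<tau> + a| = 1 / sqrt (\<tau>\<^sup>2 + a\<^sup>2)\<close>, this gives the first three estimates, the third one
  through \<open>m powr (1 - s) * |l| powr s \<le> max m |l|\<close>. The last one only needs \<open>m\<^sup>2 \<le> (m\<^sup>2 + (m+1)\<^sup>2)/2\<close>.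
\<close>

lemma norm_inverse_imaginary_plus_real:
  "norm (inverse (\<i> * complex_of_real t + complex_of_real a)) = 1 / sqrt (t^2 + a^2)"
proof -
  have "\<i> * complex_of_real t + complex_of_real a = Complex a t"
    by (simp add: complex_eq_iff)
  then show ?thesis by (simp add: norm_inverse complex_norm divide_inverse add.commute)
qed

lemma norm_inverse_imaginary_plus_real_le:
  assumes "0 < b" "b \<le> \<bar>a\<bar>"
  shows "norm (inverse (\<i> * complex_of_real t + complex_of_real a)) \<le> 1 / sqrt (t^2 + b^2)"
proof -
  have "b^2 \<le> a^2" using assms power_mono[of b "\<bar>a\<bar>" 2] by simp
  then have "sqrt (t^2 + b^2) \<le> sqrt (t^2 + a^2)" by simp
  moreover have "0 < sqrt (t^2 + b^2)" using assms by (simp add: add_nonneg_pos)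
  ultimately show ?thesis
    by (simp add: norm_inverse_imaginary_plus_real divide_left_mono)
qed

lemma norm_inverse_imaginary_plus_real_le_inverse_abs:
  assumes "a \<noteq> 0"
  shows "norm (inverse (\<i> * complex_of_real t + complex_of_real a)) \<le> 1 / \<bar>a\<bar>"
proof -
  have "\<bar>a\<bar> \<le> sqrt (t^2 + a^2)" using real_sqrt_le_mono[of "a^2" "t^2 + a^2"] by simp
  then show ?thesis
    unfolding norm_inverse_imaginary_plus_real
    by (rule divide_left_mono) (use assms in \<open>auto simp: sum_power2_gt_zero_iff\<close>)
qed

lemma powr_interpolate_le_max:
  fixes x y s :: real
  assumes "0 \<le> x" "0 \<le> y" "0 \<le> s" "s \<le> 1"
  shows "x powr (1 - s) * y powr s \<le> max x y"
proof -
  have "x powr (1 - s) * y powr s \<le> max x y powr (1 - s) * max x y powr s"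
    using assms by (intro mult_mono powr_mono2) auto
  also have "\<dots> \<le> max x y" using assms by (simp add: powr_add[symmetric])
  finally show ?thesis .
qed

definition square_gap :: "int \<Rightarrow> nat \<Rightarrow> real" where
  "square_gap l m = real_of_int (l^2) - (real m ^ 2 + (real m + 1) ^ 2) / 2"

lemma square_gap_eq: "square_gap l m = real_of_int (l^2) - real m ^ 2 - real m - 1/2"
  by (simp add: square_gap_def power2_eq_square algebra_simps)

lemma abs_square_gap_ge: "real m + 1/2 \<le> \<bar>square_gap l m\<bar>"
proof (cases "\<bar>l\<bar> \<le> int m")
  case True
  then have "\<bar>real_of_int l\<bar> \<le> real m" by linarith
  then have "real_of_int (l^2) \<le> real m ^ 2" using power_mono[of _ _ 2] by fastforce
  then show ?thesis by (simp add: square_gap_eq)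
next
  case False
  then have "real m + 1 \<le> \<bar>real_of_int l\<bar>" by linarith
  then have "(real m + 1) ^ 2 \<le> real_of_int (l^2)" using power_mono[of _ _ 2] by fastforce
  then show ?thesis by (simp add: square_gap_eq power2_eq_square algebra_simps)
qed

lemma abs_le_twice_abs_square_gap: "\<bar>real_of_int l\<bar> \<le> 2 * \<bar>square_gap l m\<bar>"
proof (cases "\<bar>l\<bar> \<le> 2 * int m")
  case True
  then show ?thesis using abs_square_gap_ge[of m l] by linarith
next
  case False
  define L where "L = \<bar>real_of_int l\<bar>"
  have "2 * real m + 1 \<le> L" using False unfolding L_def by linarith
  then have L_ge_1: "1 \<le> L" and "(2 * real m + 1) ^ 2 \<le> L ^ 2"
    using power_mono[of _ _ 2] by auto
  moreover have "real_of_int (l^2) = L ^ 2" by (simp add: L_def)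
  \<comment> \<open>\<open>4 (l\<^sup>2 - m\<^sup>2 - m - 1/2) - 2L \<ge> 3L\<^sup>2 - 2L - 1 = (3L + 1)(L - 1)\<close>\<close>
  moreover have "0 \<le> (3 * L + 1) * (L - 1)" using L_ge_1 by simp
  ultimately have "L \<le> 2 * square_gap l m"
    by (simp add: square_gap_eq power2_eq_square algebra_simps)
  then show ?thesis by (simp add: L_def)
qed

lemma square_le_square_gap_square: "real m ^ 2 \<le> square_gap l m ^ 2"
proof -
  have "real m \<le> \<bar>square_gap l m\<bar>" using abs_square_gap_ge[of m l] by simp
  then show ?thesis using power_mono[of _ _ 2] by fastforce
qed

lemma norm_resolvent_le_sqrt:
  assumes "1 \<le> m"
  shows "norm (inverse (\<i> * complex_of_real \<tau> + complex_of_real (real_of_int (k^2) + real_of_int (l^2) - Lambda k m)))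
    \<le> 1 / sqrt (real m ^ 2 + \<tau> ^ 2)"
proof -
  have "real m \<le> \<bar>square_gap l m\<bar>" using abs_square_gap_ge[of m l] by simp
  then have "norm (inverse (\<i> * complex_of_real \<tau> + complex_of_real (square_gap l m)))
      \<le> 1 / sqrt (\<tau> ^ 2 + real m ^ 2)"
    using assms by (intro norm_inverse_imaginary_plus_real_le) auto
  then show ?thesis by (simp add: Lambda_def square_gap_def add.commute)
qed

lemma norm_resolvent_le_powr:
  assumes "1 \<le> m" "l \<noteq> 0" "0 \<le> s" "s \<le> 1"
  shows "norm (inverse (\<i> * complex_of_real \<tau> + complex_of_real (real_of_int (k^2) + real_of_int (l^2) - Lambda k m)))
    \<le> 2 / (real m powr (1 - s) * \<bar>real_of_int l\<bar> powr s)"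
proof -
  have m_le_gap: "real m \<le> \<bar>square_gap l m\<bar>" using abs_square_gap_ge[of m l] by simp
  then have gap_nonzero: "square_gap l m \<noteq> 0" using assms(1) by linarith
  have "real m powr (1 - s) * \<bar>real_of_int l\<bar> powr s \<le> max (real m) \<bar>real_of_int l\<bar>"
    using assms by (intro powr_interpolate_le_max) auto
  also have "\<dots> \<le> 2 * \<bar>square_gap l m\<bar>"
    using m_le_gap abs_le_twice_abs_square_gap[of l m] by simp
  finally have interpolated: "real m powr (1 - s) * \<bar>real_of_int l\<bar> powr s \<le> 2 * \<bar>square_gap l m\<bar>" .
  have "norm (inverse (\<i> * complex_of_real \<tau> + complex_of_real (square_gap l m)))
      \<le> 1 / \<bar>square_gap l m\<bar>"
    using norm_inverse_imaginary_plus_real_le_inverse_abs[OF gap_nonzero] .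
  also have "\<dots> \<le> 2 / (real m powr (1 - s) * \<bar>real_of_int l\<bar> powr s)"
    using interpolated assms gap_nonzero by (simp add: field_simps)
  finally show ?thesis by (simp add: Lambda_def square_gap_def)
qed

lemma norm_resolvent_zero_mode_le_sqrt:
  assumes "1 \<le> m"
  shows "norm (inverse (\<i> * complex_of_real \<tau> + complex_of_real (real_of_int (k^2) - Lambda k m)))
    \<le> 1 / sqrt (\<tau> ^ 2 + real m ^ 4)"
proof -
  have "real m ^ 2 \<le> \<bar>real_of_int (k^2) - Lambda k m\<bar>"
    by (simp add: Lambda_def power2_eq_square algebra_simps)
  then have "norm (inverse (\<i> * complex_of_real \<tau> + complex_of_real (real_of_int (k^2) - Lambda k m)))
      \<le> 1 / sqrt (\<tau> ^ 2 + (real m ^ 2) ^ 2)"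
    using assms by (intro norm_inverse_imaginary_plus_real_le) auto
  then show ?thesis by (simp add: power_mult[symmetric])
qed

theorem lemma2p3:
  fixes s :: real
  assumes "1/2 < s" and "s < 1"
  shows "(\<exists>C>0. \<forall>l::int. \<forall>m::nat. m \<ge> 1 \<longrightarrow>
            (real_of_int (l^2) - (real m ^ 2 + (real m + 1) ^ 2) / 2) ^ 2 \<ge> C * real m ^ 2)
       \<and> (\<exists>C>0. \<forall>k l::int. \<forall>m::nat. \<forall>\<tau>::real. m \<ge> 1 \<longrightarrow>
            norm (inverse (\<i> * complex_of_real \<tau> + complex_of_real (real_of_int (k^2) + real_of_int (l^2) - Lambda k m)))
              \<le> C / sqrt (real m ^ 2 + \<tau> ^ 2)
          \<and> (l \<noteq> 0 \<longrightarrow>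
            norm (inverse (\<i> * complex_of_real \<tau> + complex_of_real (real_of_int (k^2) + real_of_int (l^2) - Lambda k m)))
              \<le> C / (real m powr (1 - s) * \<bar>real_of_int l\<bar> powr s))
          \<and> norm (inverse (\<i> * complex_of_real \<tau> + complex_of_real (real_of_int (k^2) - Lambda k m)))
              \<le> C / sqrt (\<tau> ^ 2 + real m ^ 4))"
proof -
  \<comment> \<open>\<open>C = 1\<close> for the first claim; the three resolvent bounds share \<open>C = 2\<close>, forced by the \<open>powr\<close> bound.\<close>
  have weaken: "r \<le> 1 / x \<Longrightarrow> r \<le> 2 / x" if "0 \<le> x" for r x :: real
    using that divide_right_mono[of 1 2 x] by linarith
  show ?thesis
    using square_le_square_gap_square norm_resolvent_le_sqrt norm_resolvent_le_powr
      norm_resolvent_zero_mode_le_sqrt assms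
    by (intro conjI[OF exI[of _ 1] exI[of _ 2]]) (auto simp: square_gap_def weaken)
qed

end
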